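(* Let $\mathcal F$ be a normal TDD representing a tensor $\phi$. Applying a reduction rule (RR1, RR2, RR3 or RR4) to $\mathcal F$ does not change the tensor it represents. Moreover, the reduced TDD of $\phi$ can be obtained from $\mathcal F$ by applying the reduction rules until none is applicable.
   Context: Fix a finite index set $I$ with a linear order $\prec$. Indices take values in $\{0,1\}$; a tensor over $I$ is a map $\{0,1\}^I\to\mathbb{C}$ (tensors over subsets of $I$ are regarded as tensors over $I$ not depending on the other indices). Each index $x$ is regarded as the tensor $x(c)=c$, and $\overline{x}(c):=1-c$; operations on tensors are pointwise. A TDD over $I$ is $\mathcal F=(V,E,index,value,low,high,w)$: a rooted directed acyclic graph with finite node set $V$ partitioned into non-terminal nodes $V_N$ and terminal nodes $V_T$, root $r_{\mathcal F}$; $index:V_N\to I$; $value:V_T\to\mathbb{C}$; $low,high:V_N\to V$ (0- and 1-successors); edges are the low-edges $(v,low(v))$ and high-edges $(v,high(v))$, $v\in V_N$, plus a unique source-less incoming edge $e_r$ of the root; $w$ gives each edge a complex weight and $w_{\mathcal F}:=w(e_r)$. Node tensors: $\Phi(v)=value(v)$ for terminal $v$; otherwise $\Phi(v)=w_0\overline{x_v}\Phi(low(v))+w_1x_v\Phi(high(v))$ with $x_v=index(v)$ and $w_0,w_1$ the low-/high-edge weights. The TDD represents $\Phi(\mathcal F):=w_{\mathcal F}\Phi(r_{\mathcal F})$. Normality (w.r.t. $\prec$): the pivot of a tensor $\phi$ is the lexicographically smallest (compare at the $\prec$-smallest differing index, $0<1$) $\vec a$ with $|\phi(\vec a)|=\max_{\vec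 b}|\phi(\vec b)|$; $\phi$ is normal if $\phi=0$ or $\phi$ equals $1$ at its pivot. A TDD is normal if $\Phi(v)$ is normal for every node $v$. A TDD is reduced if it is normal and (1) $\Phi(v)\neq0$ for every node $v$; (2) all edges of weight $0$ point to the unique terminal node, which has value $1$; (3) $\Phi(u)\neq\Phi(v)$ for any two distinct nodes $u\neq v$. "The reduced TDD of $\phi$" means a reduced TDD $\mathcal G$ with $\Phi(\mathcal G)=\phi$ (such TDDs are unique up to isomorphism among $\prec$-ordered ones). Reduction rules. RR1: merge all terminal nodes with value $1$; delete all terminal nodes with value $0$ (if any), redirect their incoming edges to the (unique) terminal node and reset the weights of these edges to $0$. RR2: redirect all weight-$0$ edges to the terminal node; if these include the incoming edge of the root, the terminal node becomes the new root; delete all nodes (and edges involving them) not reachable from the root. RR3: delete a node $v$ if its 0- and 1-successors are identical and its low- and high-edges have the same weight $w$ (either $0$ or $1$), redirecting its incoming edges to the terminal node with value $1$ if $w=0$ and otherwise to its successor. RR4: merge two nodes if they have the same index, the same 0- and 1-successors, and the same weights on the corresponding edges. *)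

theory Defs
  imports Complex_Main
begin

text \<open>The index set I is the (finite, linearly ordered) type 'i; index values
 0/1 are rendered as False/True; a tensor is a map from assignments to complex.\<close>

type_synonym 'i assignment = "'i \<Rightarrow> bool"
type_synonym 'i tensor = "'i assignment \<Rightarrow> complex"

definition idx_tensor :: "'i \<Rightarrow> 'i tensor" where
  "idx_tensor x = (\<lambda>c. if c x then 1 else 0)"

definition lex_less :: "('i::linorder) assignment \<Rightarrow> 'i assignment \<Rightarrow> bool" where
  "lex_less a b \<longleftrightarrow> (\<exists>i. \<not> a i \<and> b i \<and> (\<forall>j<i. a j = b j))"

definition max_abs :: "('i::finite) tensor \<Rightarrow> real" where
  "max_abs \<phi> = Max (range (\<lambda>b. cmod (\<phi> b)))"

definition pivot :: "('i::{finite,linorder}) tensor \<Rightarrow> 'i assignment" where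
  "pivot \<phi> = (THE a. cmod (\<phi> a) = max_abs \<phi> \<and>
                    (\<forall>b. cmod (\<phi> b) = max_abs \<phi> \<longrightarrow> a = b \<or> lex_less a b))"

definition normal_tensor :: "('i::{finite,linorder}) tensor \<Rightarrow> bool" where
  "normal_tensor \<phi> \<longleftrightarrow> \<phi> = (\<lambda>_. 0) \<or> \<phi> (pivot \<phi>) = 1"

text \<open>Nodes are elements of an arbitrary type 'v.  Edges are the low-edge and
 high-edge of each non-terminal node plus the root edge; their weights are stored
 as t_wlow v, t_whigh v and t_wroot.\<close>

record ('v, 'i) tdd =
  t_nodes :: "'v set"
  t_terms :: "'v set"
  t_root  :: 'v
  t_idx   :: "'v \<Rightarrow> 'i"
  t_val   :: "'v \<Rightarrow> complex"
  t_low   :: "'v \<Rightarrow> 'v"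
  t_high  :: "'v \<Rightarrow> 'v"
  t_wlow  :: "'v \<Rightarrow> complex"
  t_whigh :: "'v \<Rightarrow> complex"
  t_wroot :: complex

definition nonterms :: "('v,'i) tdd \<Rightarrow> 'v set" where
  "nonterms F = t_nodes F - t_terms F"

definition succ_rel :: "('v,'i) tdd \<Rightarrow> ('v \<times> 'v) set" where
  "succ_rel F = {(v, u). v \<in> nonterms F \<and> (u = t_low F v \<or> u = t_high F v)}"

definition is_tdd :: "('v,'i) tdd \<Rightarrow> bool" where
  "is_tdd F \<longleftrightarrow> finite (t_nodes F) \<and> t_terms F \<subseteq> t_nodes F \<and> t_root F \<in> t_nodes F
     \<and> (\<forall>v\<in>nonterms F. t_low F v \<in> t_nodes F \<and> t_high F v \<in> t_nodes F)
     \<and> acyclic (succ_rel F)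
     \<and> (\<forall>v\<in>t_nodes F. (t_root F, v) \<in> (succ_rel F)\<^sup>*)"

definition ordered_tdd :: "('v,'i::linorder) tdd \<Rightarrow> bool" where
  "ordered_tdd F \<longleftrightarrow> (\<forall>v\<in>nonterms F. \<forall>s\<in>{t_low F v, t_high F v}.
        s \<notin> t_terms F \<longrightarrow> t_idx F v < t_idx F s)"

text \<open>Node tensors Phi(v), computed by the defining recursion; the recursion depth
 is bounded by the number of nodes (paths in a DAG visit distinct nodes).\<close>
fun ntensor_fuel :: "nat \<Rightarrow> ('v,'i) tdd \<Rightarrow> 'v \<Rightarrow> 'i tensor" where
  "ntensor_fuel 0 F v = (\<lambda>_. 0)"
| "ntensor_fuel (Suc n) F v =
     (if v \<in> t_terms F then (\<lambda>_. t_val F v)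
      else (\<lambda>c. t_wlow F v * (1 - idx_tensor (t_idx F v) c) * ntensor_fuel n F (t_low F v) c
              + t_whigh F v * idx_tensor (t_idx F v) c * ntensor_fuel n F (t_high F v) c))"

definition node_tensor :: "('v,'i) tdd \<Rightarrow> 'v \<Rightarrow> 'i tensor" where
  "node_tensor F v = ntensor_fuel (card (t_nodes F)) F v"

definition tdd_tensor :: "('v,'i) tdd \<Rightarrow> 'i tensor" where
  "tdd_tensor F = (\<lambda>c. t_wroot F * node_tensor F (t_root F) c)"

definition normal_tdd :: "('v,'i::{finite,linorder}) tdd \<Rightarrow> bool" where
  "normal_tdd F \<longleftrightarrow> (\<forall>v\<in>t_nodes F. normal_tensor (node_tensor F v))"

definition reduced_tdd :: "('v,'i::{finite,linorder}) tdd \<Rightarrow> bool" where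
  "reduced_tdd F \<longleftrightarrow> normal_tdd F
     \<and> (\<forall>v\<in>t_nodes F. node_tensor F v \<noteq> (\<lambda>_. 0))
     \<and> (\<exists>t. t_terms F = {t} \<and> t_val F t = 1
           \<and> (t_wroot F = 0 \<longrightarrow> t_root F = t)
           \<and> (\<forall>v\<in>nonterms F. (t_wlow F v = 0 \<longrightarrow> t_low F v = t)
                             \<and> (t_whigh F v = 0 \<longrightarrow> t_high F v = t)))
     \<and> (\<forall>u\<in>t_nodes F. \<forall>v\<in>t_nodes F. u \<noteq> v \<longrightarrow> node_tensor F u \<noteq> node_tensor F v)"

text \<open>RR1: all terminals of value 0 or 1 are replaced by one terminal t of value 1
 (an existing value-1 terminal, or, if none exists, a former value-0 terminal);
 edges into value-0 terminals get weight 0.  Applicable iff there are at least two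
 value-1 terminals or some value-0 terminal.\<close>
definition rr1 :: "('v,'i) tdd \<Rightarrow> ('v,'i) tdd \<Rightarrow> bool" where
  "rr1 F G \<longleftrightarrow>
     (let T01 = {u\<in>t_terms F. t_val F u = 0 \<or> t_val F u = 1};
          T1 = {u\<in>t_terms F. t_val F u = 1};
          T0 = {u\<in>t_terms F. t_val F u = 0}
      in (card T1 \<ge> 2 \<or> T0 \<noteq> {}) \<and>
       (\<exists>t\<in>T01. (t \<in> T1 \<or> T1 = {}) \<and>
          (let r = (\<lambda>u. if u \<in> T01 then t else u);
               z = (\<lambda>u w. if u \<in> T0 then 0 else w)
           in G = F\<lparr> t_nodes := (t_nodes F - T01) \<union> {t},
                     t_terms := (t_terms F - T01) \<union> {t},
                     t_val := (\<lambda>u. if u = t then 1 else t_val F u),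
                     t_root := r (t_root F),
                     t_low := (\<lambda>v. r (t_low F v)),
                     t_high := (\<lambda>v. r (t_high F v)),
                     t_wlow := (\<lambda>v. z (t_low F v) (t_wlow F v)),
                     t_whigh := (\<lambda>v. z (t_high F v) (t_whigh F v)),
                     t_wroot := z (t_root F) (t_wroot F) \<rparr>)))"

text \<open>RR2 (needs the unique terminal node t): weight-0 edges are redirected to t,
 then unreachable nodes are deleted.  Applicable iff this changes something.\<close>
definition rr2 :: "('v,'i) tdd \<Rightarrow> ('v,'i) tdd \<Rightarrow> bool" where
  "rr2 F G \<longleftrightarrow> (\<exists>t. t_terms F = {t} \<and>
     ((t_wroot F = 0 \<and> t_root F \<noteq> t)
      \<or> (\<exists>v\<in>nonterms F. (t_wlow F v = 0 \<and> t_low F v \<noteq> t) \<or> (t_whigh F v = 0 \<and> t_high F v \<noteq> t))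
      \<or> (\<exists>v\<in>t_nodes F. (t_root F, v) \<notin> (succ_rel F)\<^sup>*)) \<and>
     (let G0 = F\<lparr> t_root := (if t_wroot F = 0 then t else t_root F),
                  t_low := (\<lambda>v. if t_wlow F v = 0 then t else t_low F v),
                  t_high := (\<lambda>v. if t_whigh F v = 0 then t else t_high F v) \<rparr>;
          R = {v\<in>t_nodes G0. (t_root G0, v) \<in> (succ_rel G0)\<^sup>*}
      in G = G0\<lparr> t_nodes := R, t_terms := t_terms G0 \<inter> R \<rparr>))"

definition redirect_delete :: "('v,'i) tdd \<Rightarrow> 'v \<Rightarrow> 'v \<Rightarrow> bool \<Rightarrow> ('v,'i) tdd" where
  "redirect_delete F v s zero = F\<lparr>
      t_nodes := t_nodes F - {v},
      t_root := (if t_root F = v then s else t_root F),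
      t_low := (\<lambda>p. if t_low F p = v then s else t_low F p),
      t_high := (\<lambda>p. if t_high F p = v then s else t_high F p),
      t_wroot := (if t_root F = v \<and> zero then 0 else t_wroot F),
      t_wlow := (\<lambda>p. if t_low F p = v \<and> zero then 0 else t_wlow F p),
      t_whigh := (\<lambda>p. if t_high F p = v \<and> zero then 0 else t_whigh F p) \<rparr>"

definition rr3 :: "('v,'i) tdd \<Rightarrow> ('v,'i) tdd \<Rightarrow> bool" where
  "rr3 F G \<longleftrightarrow> (\<exists>v\<in>nonterms F. t_low F v = t_high F v \<and> t_wlow F v = t_whigh F v \<and>
     ((t_wlow F v = 1 \<and> G = redirect_delete F v (t_low F v) False)
      \<or> (t_wlow F v = 0 \<and> (\<exists>t\<in>t_terms F. t_val F t = 1 \<and> G = redirect_delete F v t True))))"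

definition rr4 :: "('v,'i) tdd \<Rightarrow> ('v,'i) tdd \<Rightarrow> bool" where
  "rr4 F G \<longleftrightarrow> (\<exists>u\<in>nonterms F. \<exists>v\<in>nonterms F. u \<noteq> v \<and>
      t_idx F u = t_idx F v \<and> t_low F u = t_low F v \<and> t_high F u = t_high F v \<and>
      t_wlow F u = t_wlow F v \<and> t_whigh F u = t_whigh F v \<and>
      G = redirect_delete F v u False)"

definition rr_step :: "('v,'i) tdd \<Rightarrow> ('v,'i) tdd \<Rightarrow> bool" where
  "rr_step F G \<longleftrightarrow> rr1 F G \<or> rr2 F G \<or> rr3 F G \<or> rr4 F G"

end

theory Submission
  imports Defs
begin

(* Each rule rewires the graph so that the old node tensors, restricted to the surviving nodes
   (and with the constant 1 on a merged terminal), still solve the defining recursion of the new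
   graph.  On a finite acyclic graph that recursion has a unique solution, so the represented
   tensor is unchanged and normality and orderedness are inherited.

   If no rule applies, there is a single terminal, of value 1, every zero edge leads to it, every
   node is reachable, and no node is redundant or duplicated.  Distinct nodes then have distinct
   tensors, by induction on the number of descendants: if two nodes have the same index,
   normality makes their weighted cofactor edges coincide and RR4 identifies them; otherwise the
   node of smaller index would have a tensor independent of its own index, which normality and
   RR3 exclude. *)

section \<open>Node tensors of acyclic TDDs\<close>

text \<open>Reduction steps may leave nodes unreachable from the root (only RR2 removes them), so the
  invariant of the reduction process drops this part of is_tdd.\<close>
definition tdd_dag :: "('v,'i) tdd \<Rightarrow> bool" where
  "tdd_dag F \<longleftrightarrow> finite (t_nodes F) \<and> t_terms F \<subseteq> t_nodes F \<and> t_root F \<in> t_nodes F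
     \<and> (\<forall>v\<in>nonterms F. t_low F v \<in> t_nodes F \<and> t_high F v \<in> t_nodes F)
     \<and> acyclic (succ_rel F)"

lemma is_tdd_iff:
  "is_tdd F \<longleftrightarrow> tdd_dag F \<and> (\<forall>v\<in>t_nodes F. (t_root F, v) \<in> (succ_rel F)\<^sup>*)"
  by (auto simp: is_tdd_def tdd_dag_def)

lemma tdd_dag_nodes:
  assumes "tdd_dag F"
  shows "finite (t_nodes F)" "t_root F \<in> t_nodes F" "v \<in> t_terms F \<Longrightarrow> v \<in> t_nodes F"
    "v \<in> nonterms F \<Longrightarrow> t_low F v \<in> t_nodes F" "v \<in> nonterms F \<Longrightarrow> t_high F v \<in> t_nodes F"
  using assms by (auto simp: tdd_dag_def)

lemma nontermsI: "v \<in> t_nodes F \<Longrightarrow> v \<notin> t_terms F \<Longrightarrow> v \<in> nonterms F"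
  by (simp add: nonterms_def)

lemma nontermsD:
  assumes "v \<in> nonterms F"
  shows "v \<in> t_nodes F" "v \<notin> t_terms F"
  using assms by (simp_all add: nonterms_def)

lemma succ_rel_low: "v \<in> nonterms F \<Longrightarrow> (v, t_low F v) \<in> succ_rel F"
  and succ_rel_high: "v \<in> nonterms F \<Longrightarrow> (v, t_high F v) \<in> succ_rel F"
  by (auto simp: succ_rel_def)

lemma succ_rel_rtrancl_terminal:
  "(t, a) \<in> (succ_rel F)\<^sup>* \<Longrightarrow> t \<notin> nonterms F \<Longrightarrow> a = t"
  by (auto elim: converse_rtranclE simp: succ_rel_def)

definition descendants :: "('v,'i) tdd \<Rightarrow> 'v \<Rightarrow> 'v set" where
  "descendants F v = {w. (v, w) \<in> (succ_rel F)\<^sup>*}"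

lemma descendants_subset:
  assumes "tdd_dag F" "v \<in> t_nodes F"
  shows "descendants F v \<subseteq> t_nodes F"
proof
  fix w assume "w \<in> descendants F v"
  then have "(v, w) \<in> (succ_rel F)\<^sup>*" by (simp add: descendants_def)
  then show "w \<in> t_nodes F"
    by induction (use assms in \<open>auto simp: succ_rel_def tdd_dag_def\<close>)
qed

lemma card_descendants_bounds:
  assumes "tdd_dag F" "v \<in> t_nodes F"
  shows "0 < card (descendants F v)" "card (descendants F v) \<le> card (t_nodes F)"
proof -
  have fin: "finite (descendants F v)"
    using descendants_subset[OF assms] tdd_dag_nodes(1)[OF assms(1)] by (rule finite_subset)
  have "v \<in> descendants F v" by (simp add: descendants_def)
  with fin show "0 < card (descendants F v)" by (auto simp: card_gt_0_iff)
  show "card (descendants F v) \<le> card (t_nodes F)"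
    by (rule card_mono[OF tdd_dag_nodes(1)[OF assms(1)] descendants_subset[OF assms]])
qed

lemma tdd_dag_no_back_path:
  assumes "tdd_dag F" "(v, s) \<in> succ_rel F"
  shows "(s, v) \<notin> (succ_rel F)\<^sup>*"
proof
  assume "(s, v) \<in> (succ_rel F)\<^sup>*"
  with assms(2) have "(v, v) \<in> (succ_rel F)\<^sup>+" by (rule rtrancl_into_trancl2)
  with assms(1) show False by (simp add: tdd_dag_def acyclic_def)
qed

lemma card_descendants_less:
  assumes "tdd_dag F" and edge: "(v, s) \<in> succ_rel F"
  shows "card (descendants F s) < card (descendants F v)"
proof -
  have v: "v \<in> t_nodes F" using edge by (simp add: succ_rel_def nonterms_def)
  have "v \<notin> descendants F s" "v \<in> descendants F v"
    using tdd_dag_no_back_path[OF assms] by (simp_all add: descendants_def)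
  moreover have "descendants F s \<subseteq> descendants F v"
    using edge by (auto simp: descendants_def intro: converse_rtrancl_into_rtrancl)
  ultimately have "descendants F s \<subset> descendants F v" by blast
  then show ?thesis
    using card_descendants_bounds(1)[OF assms(1) v] by (intro psubset_card_mono) (auto intro: card_ge_0_finite)
qed

lemma tdd_dag_induct [consumes 2, case_names terminal nonterm]:
  assumes "tdd_dag F" "v \<in> t_nodes F"
    and terminal: "\<And>v. v \<in> t_terms F \<Longrightarrow> P v"
    and nonterm: "\<And>v. v \<in> nonterms F \<Longrightarrow> P (t_low F v) \<Longrightarrow> P (t_high F v) \<Longrightarrow> P v"
  shows "P v"
  using assms(2)
proof (induction "card (descendants F v)" arbitrary: v rule: less_induct)
  case less
  show ?case
  proof (cases "v \<in> t_terms F")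
    case False
    then have v: "v \<in> nonterms F" using less.prems by (rule_tac nontermsI)
    show ?thesis
      using nonterm[OF v] less.hyps tdd_dag_nodes(4,5)[OF assms(1) v]
        card_descendants_less[OF assms(1) succ_rel_low[OF v]]
        card_descendants_less[OF assms(1) succ_rel_high[OF v]]
      by blast
  qed (rule terminal)
qed

definition node_expansion :: "('v,'i) tdd \<Rightarrow> ('v \<Rightarrow> 'i tensor) \<Rightarrow> 'v \<Rightarrow> 'i tensor" where
  "node_expansion F T v = (if v \<in> t_terms F then (\<lambda>_. t_val F v)
      else (\<lambda>c. t_wlow F v * (1 - idx_tensor (t_idx F v) c) * T (t_low F v) c
              + t_whigh F v * idx_tensor (t_idx F v) c * T (t_high F v) c))"

lemma ntensor_fuel_stable:
  assumes "tdd_dag F"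
  shows "v \<in> t_nodes F \<Longrightarrow> card (descendants F v) \<le> n \<Longrightarrow> n \<le> m
    \<Longrightarrow> ntensor_fuel m F v = ntensor_fuel n F v"
proof (induction n arbitrary: m v)
  case 0
  then show ?case using card_descendants_bounds(1)[OF assms] by fastforce
next
  case (Suc n)
  then obtain m' where m: "m = Suc m'" by (cases m) auto
  show ?case
  proof (cases "v \<in> t_terms F")
    case False
    then have v: "v \<in> nonterms F" using Suc.prems(1) by (rule_tac nontermsI)
    have "ntensor_fuel m' F s = ntensor_fuel n F s" if "(v, s) \<in> succ_rel F" for s
    proof (rule Suc.IH)
      show "s \<in> t_nodes F" using that assms by (auto simp: succ_rel_def tdd_dag_def)
      show "card (descendants F s) \<le> n"
        using card_descendants_less[OF assms that] Suc.prems(2) by simp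
      show "n \<le> m'" using Suc.prems(3) m by simp
    qed
    then show ?thesis using m False succ_rel_low[OF v] succ_rel_high[OF v] by simp
  qed (simp add: m)
qed

lemma node_tensor_expansion:
  assumes "tdd_dag F" "v \<in> t_nodes F"
  shows "node_tensor F v = node_expansion F (node_tensor F) v"
proof -
  obtain k where k: "card (t_nodes F) = Suc k"
    using card_descendants_bounds[OF assms] by (cases "card (t_nodes F)") auto
  show ?thesis
  proof (cases "v \<in> t_terms F")
    case False
    then have v: "v \<in> nonterms F" using assms(2) by (rule_tac nontermsI)
    have "ntensor_fuel (Suc k) F s = ntensor_fuel k F s" if "(v, s) \<in> succ_rel F" for s
    proof (rule ntensor_fuel_stable[OF assms(1)])
      show "s \<in> t_nodes F" using that assms(1) by (auto simp: succ_rel_def tdd_dag_def)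
      show "card (descendants F s) \<le> k"
        using card_descendants_less[OF assms(1) that] card_descendants_bounds(2)[OF assms] k by simp
    qed simp
    then show ?thesis
      using False succ_rel_low[OF v] succ_rel_high[OF v]
      by (simp add: node_tensor_def node_expansion_def k)
  qed (simp add: node_tensor_def node_expansion_def k)
qed

lemma node_tensor_unique:
  assumes "tdd_dag F" "\<And>v. v \<in> t_nodes F \<Longrightarrow> T v = node_expansion F T v" "v \<in> t_nodes F"
  shows "T v = node_tensor F v"
  using assms(1,3)
proof (induction rule: tdd_dag_induct)
  case (terminal v)
  then show ?case
    using assms(2) node_tensor_expansion[OF assms(1)] tdd_dag_nodes(3)[OF assms(1)]
    by (simp add: node_expansion_def)
next
  case (nonterm v)
  then show ?case
    using assms(2) node_tensor_expansion[OF assms(1)] nontermsD[OF nonterm(1)]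
    by (simp add: node_expansion_def)
qed

section \<open>Ordered and normal TDDs\<close>

definition indep_of :: "'i tensor \<Rightarrow> 'i \<Rightarrow> bool" where
  "indep_of \<phi> x \<longleftrightarrow> (\<forall>c b. \<phi> (c(x := b)) = \<phi> c)"

lemma ordered_tddD:
  assumes "ordered_tdd F" "v \<in> nonterms F"
  shows "t_low F v \<notin> t_terms F \<Longrightarrow> t_idx F v < t_idx F (t_low F v)"
    and "t_high F v \<notin> t_terms F \<Longrightarrow> t_idx F v < t_idx F (t_high F v)"
  using assms by (auto simp: ordered_tdd_def)

lemma node_tensor_terminal:
  assumes "tdd_dag F" "v \<in> t_terms F"
  shows "node_tensor F v = (\<lambda>_. t_val F v)"
  using node_tensor_expansion[OF assms(1) tdd_dag_nodes(3)[OF assms]] assms(2)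
  by (simp add: node_expansion_def)

lemma node_tensor_indep_of:
  assumes "tdd_dag F" "ordered_tdd F" "v \<in> t_nodes F"
  shows "(v \<in> nonterms F \<Longrightarrow> x < t_idx F v) \<Longrightarrow> indep_of (node_tensor F v) x"
  using assms(1,3)
proof (induction rule: tdd_dag_induct)
  case (terminal v)
  then show ?case using node_tensor_terminal[OF assms(1)] by (simp add: indep_of_def)
next
  case (nonterm v)
  have x: "x < t_idx F v" using nonterm by blast
  have "indep_of (node_tensor F (t_low F v)) x" "indep_of (node_tensor F (t_high F v)) x"
    using nonterm(2,3) ordered_tddD[OF assms(2) nonterm(1)] x by (auto simp: nonterms_def intro: less_trans)
  then show ?case
    using less_imp_neq[OF x] not_sym[OF less_imp_neq[OF x]] nontermsD[OF nonterm(1)]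
      node_tensor_expansion[OF assms(1) nontermsD(1)[OF nonterm(1)]]
    by (simp add: node_expansion_def indep_of_def idx_tensor_def)
qed

lemma node_tensor_cofactors:
  assumes "tdd_dag F" "ordered_tdd F" "v \<in> nonterms F"
  shows "node_tensor F v (c(t_idx F v := False)) = t_wlow F v * node_tensor F (t_low F v) c"
    and "node_tensor F v (c(t_idx F v := True)) = t_whigh F v * node_tensor F (t_high F v) c"
proof -
  have "indep_of (node_tensor F (t_low F v)) (t_idx F v)"
    "indep_of (node_tensor F (t_high F v)) (t_idx F v)"
    using node_tensor_indep_of[OF assms(1,2)] tdd_dag_nodes(4,5)[OF assms(1,3)]
      ordered_tddD[OF assms(2,3)] by (auto simp: nonterms_def)
  then show "node_tensor F v (c(t_idx F v := False)) = t_wlow F v * node_tensor F (t_low F v) c"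
    and "node_tensor F v (c(t_idx F v := True)) = t_whigh F v * node_tensor F (t_high F v) c"
    using node_tensor_expansion[OF assms(1) nontermsD(1)[OF assms(3)]] nontermsD[OF assms(3)]
    by (simp_all add: node_expansion_def indep_of_def idx_tensor_def)
qed

lemma normal_tensor_const:
  "normal_tensor (\<lambda>_::('i::{finite,linorder}) assignment. a) \<longleftrightarrow> a = 0 \<or> a = 1"
  by (auto simp: normal_tensor_def fun_eq_iff)

lemma max_abs_scale:
  fixes \<phi> :: "('i::finite) tensor"
  shows "max_abs (\<lambda>c. k * \<phi> c) = cmod k * max_abs \<phi>"
proof -
  have "mono ((*) (cmod k))" by (simp add: monoI mult_left_mono)
  moreover have "range (\<lambda>b. cmod (k * \<phi> b)) = (*) (cmod k) ` range (\<lambda>b. cmod (\<phi> b))"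
    by (auto simp: norm_mult)
  ultimately show ?thesis
    unfolding max_abs_def by (simp add: mono_Max_commute)
qed

lemma pivot_scale:
  fixes \<phi> :: "('i::{finite,linorder}) tensor"
  assumes "k \<noteq> 0"
  shows "pivot (\<lambda>c. k * \<phi> c) = pivot \<phi>"
proof -
  have "cmod (k * \<phi> a) = max_abs (\<lambda>c. k * \<phi> c) \<longleftrightarrow> cmod (\<phi> a) = max_abs \<phi>" for a
    using assms by (simp add: max_abs_scale norm_mult)
  then show ?thesis by (simp only: pivot_def)
qed

text \<open>Scaling by a nonzero factor does not move the pivot, and both tensors are 1 there.\<close>
lemma normal_tensor_scaled_eq:
  fixes \<phi> \<psi> :: "('i::{finite,linorder}) tensor"
  assumes "normal_tensor \<phi>" "normal_tensor \<psi>" "\<phi> \<noteq> (\<lambda>_. 0)" "\<psi> \<noteq> (\<lambda>_. 0)"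
    and eq: "\<And>c. a * \<phi> c = b * \<psi> c"
  shows "a = b \<and> (a \<noteq> 0 \<longrightarrow> \<phi> = \<psi>)"
proof (cases "a = 0 \<or> b = 0")
  case True
  obtain c d where "\<phi> c \<noteq> 0" "\<psi> d \<noteq> 0" using assms(3,4) by (auto simp: fun_eq_iff)
  then show ?thesis using True eq[of c] eq[of d] by auto
next
  case False
  have "pivot \<phi> = pivot \<psi>"
    using pivot_scale[of a \<phi>] pivot_scale[of b \<psi>] False eq by simp
  moreover have "\<phi> (pivot \<phi>) = 1" "\<psi> (pivot \<psi>) = 1"
    using assms(1-4) by (auto simp: normal_tensor_def)
  ultimately have "a = b" using eq[of "pivot \<phi>"] by simp
  then show ?thesis using eq False by (simp add: fun_eq_iff)
qed

section \<open>Soundness of the reduction rules\<close>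

lemma acyclic_redirect:
  assumes "acyclic S" and redirected: "R \<subseteq> S \<union> UNIV \<times> {s}"
    and stable: "\<And>a b. (s, a) \<in> S\<^sup>* \<Longrightarrow> (a, b) \<in> R \<Longrightarrow> (a, b) \<in> S"
  shows "acyclic R"
proof -
  have old_or_from_s: "(x, y) \<in> S\<^sup>+ \<or> (s, y) \<in> S\<^sup>*" if "(x, y) \<in> R\<^sup>+" for x y
    using that
  proof induction
    case (base y)
    then show ?case using redirected by auto
  next
    case (step y z)
    then show ?case using redirected by (auto intro: trancl_into_trancl rtrancl_into_rtrancl)
  qed
  have old_below_s: "(x, y) \<in> S\<^sup>+" if "(x, y) \<in> R\<^sup>+" "(s, x) \<in> S\<^sup>*" for x y
    using that
  proof induction
    case (base y)
    then show ?case using stable by blast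
  next
    case (step y z)
    then have "(s, y) \<in> S\<^sup>*" by (meson rtrancl_trans trancl_into_rtrancl)
    with step show ?case using stable by (meson trancl_into_trancl)
  qed
  show ?thesis
    unfolding acyclic_def
  proof (intro allI notI)
    fix x assume "(x, x) \<in> R\<^sup>+"
    then have "(x, x) \<in> S\<^sup>+" using old_or_from_s old_below_s by blast
    then show False using assms(1) by (simp add: acyclic_def)
  qed
qed

definition normal_ordered_dag :: "('v,'i::{finite,linorder}) tdd \<Rightarrow> bool" where
  "normal_ordered_dag F \<longleftrightarrow> tdd_dag F \<and> ordered_tdd F \<and> normal_tdd F"

lemma redirect_delete_simps [simp]:
  "t_nodes (redirect_delete F v s z) = t_nodes F - {v}"
  "t_terms (redirect_delete F v s z) = t_terms F"
  "t_idx (redirect_delete F v s z) = t_idx F"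
  "t_val (redirect_delete F v s z) = t_val F"
  "t_root (redirect_delete F v s z) = (if t_root F = v then s else t_root F)"
  "t_low (redirect_delete F v s z) = (\<lambda>p. if t_low F p = v then s else t_low F p)"
  "t_high (redirect_delete F v s z) = (\<lambda>p. if t_high F p = v then s else t_high F p)"
  "t_wroot (redirect_delete F v s z) = (if t_root F = v \<and> z then 0 else t_wroot F)"
  "t_wlow (redirect_delete F v s z) = (\<lambda>p. if t_low F p = v \<and> z then 0 else t_wlow F p)"
  "t_whigh (redirect_delete F v s z) = (\<lambda>p. if t_high F p = v \<and> z then 0 else t_whigh F p)"
  by (simp_all add: redirect_delete_def)

lemma nonterms_redirect_delete [simp]:
  "nonterms (redirect_delete F v s z) = nonterms F - {v}"
  by (auto simp: nonterms_def)

lemma acyclic_redirect_delete: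
  assumes "tdd_dag F" "(s, v) \<notin> (succ_rel F)\<^sup>*"
  shows "acyclic (succ_rel (redirect_delete F v s z))"
proof (rule acyclic_redirect[where S = "succ_rel F" and s = s])
  show "acyclic (succ_rel F)" using assms(1) by (simp add: tdd_dag_def)
  show "succ_rel (redirect_delete F v s z) \<subseteq> succ_rel F \<union> UNIV \<times> {s}"
    by (auto simp: succ_rel_def)
next
  fix a b assume "(s, a) \<in> (succ_rel F)\<^sup>*" "(a, b) \<in> succ_rel (redirect_delete F v s z)"
  moreover have "(a, v) \<notin> succ_rel F" if "(s, a) \<in> (succ_rel F)\<^sup>*"
    using that assms(2) by (meson rtrancl.rtrancl_into_rtrancl)
  ultimately show "(a, b) \<in> succ_rel F" by (auto simp: succ_rel_def split: if_splits)
qed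

lemma redirect_delete_sound:
  assumes inv: "normal_ordered_dag F" and v: "v \<in> nonterms F" and s: "s \<in> t_nodes F"
    and no_path: "(s, v) \<notin> (succ_rel F)\<^sup>*"
    and ordered: "s \<notin> t_terms F \<Longrightarrow> t_idx F v \<le> t_idx F s"
    and tensor: "if z then node_tensor F v = (\<lambda>_. 0) else node_tensor F v = node_tensor F s"
  defines "G \<equiv> redirect_delete F v s z"
  shows "normal_ordered_dag G \<and> tdd_tensor G = tdd_tensor F"
proof -
  have F: "tdd_dag F" "ordered_tdd F" "normal_tdd F" using inv by (simp_all add: normal_ordered_dag_def)
  have "s \<noteq> v" using no_path by auto
  have dag: "tdd_dag G"
    using F(1) s \<open>s \<noteq> v\<close> nontermsD[OF v] acyclic_redirect_delete[OF F(1) no_path]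
    by (auto simp: tdd_dag_def G_def)
  have "node_tensor F p = node_expansion G (node_tensor F) p" if "p \<in> t_nodes G" for p
    using that node_tensor_expansion[OF F(1), of p] tensor
    by (cases z) (auto simp: G_def node_expansion_def fun_eq_iff)
  then have same: "node_tensor G p = node_tensor F p" if "p \<in> t_nodes G" for p
    using node_tensor_unique[OF dag _ that] by metis
  have "ordered_tdd G"
    using F(2) ordered nontermsD[OF v] order.strict_trans2[OF _ ordered]
    unfolding ordered_tdd_def G_def by (auto 4 4)
  moreover have "normal_tdd G" using F(3) same by (simp add: normal_tdd_def G_def)
  moreover have "tdd_tensor G = tdd_tensor F"
    using same[OF tdd_dag_nodes(2)[OF dag]] tensor
    by (cases z) (auto simp: tdd_tensor_def G_def fun_eq_iff)
  ultimately show ?thesis using dag by (simp add: normal_ordered_dag_def)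
qed

lemma rr3_sound:
  assumes inv: "normal_ordered_dag F" and "rr3 F G"
  shows "normal_ordered_dag G \<and> tdd_tensor G = tdd_tensor F"
proof -
  have F: "tdd_dag F" "ordered_tdd F" using inv by (simp_all add: normal_ordered_dag_def)
  obtain v where v: "v \<in> nonterms F" and same: "t_low F v = t_high F v" "t_wlow F v = t_whigh F v"
    and choice: "t_wlow F v = 1 \<and> G = redirect_delete F v (t_low F v) False
      \<or> t_wlow F v = 0 \<and> (\<exists>t\<in>t_terms F. t_val F t = 1 \<and> G = redirect_delete F v t True)"
    using assms(2) unfolding rr3_def by blast
  have expand: "node_tensor F v = (\<lambda>c. t_wlow F v * node_tensor F (t_low F v) c)"
    using node_tensor_expansion[OF F(1) nontermsD(1)[OF v]] nontermsD[OF v] same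
    by (auto simp: node_expansion_def fun_eq_iff algebra_simps)
  from choice show ?thesis
  proof (elim disjE conjE bexE)
    assume "t_wlow F v = 1" "G = redirect_delete F v (t_low F v) False"
    moreover have "t_low F v \<notin> t_terms F \<Longrightarrow> t_idx F v \<le> t_idx F (t_low F v)"
      using ordered_tddD(1)[OF F(2) v] by fastforce
    ultimately show ?thesis
      using redirect_delete_sound[OF inv v tdd_dag_nodes(4)[OF F(1) v]
          tdd_dag_no_back_path[OF F(1) succ_rel_low[OF v]], of False] expand
      by simp
  next
    fix t assume "t_wlow F v = 0" "t \<in> t_terms F" "G = redirect_delete F v t True"
    moreover have "(t, v) \<notin> (succ_rel F)\<^sup>*"
      using succ_rel_rtrancl_terminal v \<open>t \<in> t_terms F\<close> by (fastforce simp: nonterms_def)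
    ultimately show ?thesis
      using redirect_delete_sound[OF inv v tdd_dag_nodes(3)[OF F(1)]] expand by simp
  qed
qed

lemma rr4_sound:
  assumes inv: "normal_ordered_dag F" and "rr4 F G"
  shows "normal_ordered_dag G \<and> tdd_tensor G = tdd_tensor F"
proof -
  have F: "tdd_dag F" using inv by (simp add: normal_ordered_dag_def)
  obtain u v where uv: "u \<in> nonterms F" "v \<in> nonterms F" "u \<noteq> v"
    and twins: "t_idx F u = t_idx F v" "t_low F u = t_low F v" "t_high F u = t_high F v"
      "t_wlow F u = t_wlow F v" "t_whigh F u = t_whigh F v"
    and G: "G = redirect_delete F v u False"
    using assms(2) by (auto simp: rr4_def)
  have same_succs: "(u, c) \<in> succ_rel F \<longleftrightarrow> (v, c) \<in> succ_rel F" for c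
    using uv twins by (auto simp: succ_rel_def)
  have no_path: "(u, v) \<notin> (succ_rel F)\<^sup>*"
  proof
    assume "(u, v) \<in> (succ_rel F)\<^sup>*"
    then obtain c where "(u, c) \<in> succ_rel F" "(c, v) \<in> (succ_rel F)\<^sup>*"
      using uv(3) by (meson converse_rtranclE)
    then show False using tdd_dag_no_back_path[OF F] same_succs by blast
  qed
  have "node_tensor F v = node_tensor F u"
    using node_tensor_expansion[OF F nontermsD(1)[OF uv(1)]]
      node_tensor_expansion[OF F nontermsD(1)[OF uv(2)]] nontermsD[OF uv(1)]
      nontermsD[OF uv(2)] twins
    by (simp add: node_expansion_def)
  then show ?thesis
    using redirect_delete_sound[OF inv uv(2) nontermsD(1)[OF uv(1)] no_path] twins(1) G
    by simp
qed

definition terminals_valued :: "('v,'i) tdd \<Rightarrow> complex set \<Rightarrow> 'v set" where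
  "terminals_valued F A = {u \<in> t_terms F. t_val F u \<in> A}"

definition merge_terminals :: "('v,'i) tdd \<Rightarrow> 'v \<Rightarrow> ('v,'i) tdd" where
  "merge_terminals F t = F\<lparr>
     t_nodes := (t_nodes F - terminals_valued F {0, 1}) \<union> {t},
     t_terms := (t_terms F - terminals_valued F {0, 1}) \<union> {t},
     t_val := (\<lambda>u. if u = t then 1 else t_val F u),
     t_root := (if t_root F \<in> terminals_valued F {0, 1} then t else t_root F),
     t_low := (\<lambda>v. if t_low F v \<in> terminals_valued F {0, 1} then t else t_low F v),
     t_high := (\<lambda>v. if t_high F v \<in> terminals_valued F {0, 1} then t else t_high F v),
     t_wlow := (\<lambda>v. if t_low F v \<in> terminals_valued F {0} then 0 else t_wlow F v),
     t_whigh := (\<lambda>v. if t_high F v \<in> terminals_valued F {0} then 0 else t_whigh F v),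
     t_wroot := (if t_root F \<in> terminals_valued F {0} then 0 else t_wroot F) \<rparr>"

lemma rr1_iff:
  "rr1 F G \<longleftrightarrow>
     (2 \<le> card (terminals_valued F {1}) \<or> terminals_valued F {0} \<noteq> {}) \<and>
     (\<exists>t\<in>terminals_valued F {0, 1}.
        (t \<in> terminals_valued F {1} \<or> terminals_valued F {1} = {}) \<and> G = merge_terminals F t)"
  by (simp add: rr1_def merge_terminals_def terminals_valued_def Let_def)

lemma merge_terminals_simps [simp]:
  "t_nodes (merge_terminals F t) = (t_nodes F - terminals_valued F {0, 1}) \<union> {t}"
  "t_terms (merge_terminals F t) = (t_terms F - terminals_valued F {0, 1}) \<union> {t}"
  "t_idx (merge_terminals F t) = t_idx F"
  "t_val (merge_terminals F t) = (\<lambda>u. if u = t then 1 else t_val F u)"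
  "t_root (merge_terminals F t) =
     (if t_root F \<in> terminals_valued F {0, 1} then t else t_root F)"
  "t_low (merge_terminals F t) =
     (\<lambda>v. if t_low F v \<in> terminals_valued F {0, 1} then t else t_low F v)"
  "t_high (merge_terminals F t) =
     (\<lambda>v. if t_high F v \<in> terminals_valued F {0, 1} then t else t_high F v)"
  "t_wroot (merge_terminals F t) =
     (if t_root F \<in> terminals_valued F {0} then 0 else t_wroot F)"
  "t_wlow (merge_terminals F t) =
     (\<lambda>v. if t_low F v \<in> terminals_valued F {0} then 0 else t_wlow F v)"
  "t_whigh (merge_terminals F t) =
     (\<lambda>v. if t_high F v \<in> terminals_valued F {0} then 0 else t_whigh F v)"
  by (simp_all add: merge_terminals_def)

lemma nonterms_merge_terminals:
  "t \<in> t_terms F \<Longrightarrow> nonterms (merge_terminals F t) = nonterms F"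
  by (auto simp: nonterms_def terminals_valued_def)

lemma merge_terminals_dag:
  assumes F: "tdd_dag F" and t: "t \<in> terminals_valued F {0, 1}"
  shows "tdd_dag (merge_terminals F t)"
proof -
  let ?G = "merge_terminals F t"
  have t_term: "t \<in> t_terms F" using t by (simp add: terminals_valued_def)
  have "acyclic (succ_rel ?G)"
  proof (rule acyclic_redirect[where S = "succ_rel F" and s = t])
    show "acyclic (succ_rel F)" using F by (simp add: tdd_dag_def)
    show "succ_rel ?G \<subseteq> succ_rel F \<union> UNIV \<times> {t}"
      by (auto simp: succ_rel_def nonterms_merge_terminals[OF t_term])
    show "(a, b) \<in> succ_rel F" if "(t, a) \<in> (succ_rel F)\<^sup>*" "(a, b) \<in> succ_rel ?G" for a b
      using that succ_rel_rtrancl_terminal[of t a F] t_term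
      by (auto simp: succ_rel_def nonterms_merge_terminals[OF t_term] nonterms_def)
  qed
  then show ?thesis
    using F t_term tdd_dag_nodes[OF F]
    by (auto simp: tdd_dag_def nonterms_merge_terminals)
qed

lemma node_tensor_merge_terminals:
  assumes F: "tdd_dag F" and t: "t \<in> terminals_valued F {0, 1}"
    and p: "p \<in> t_nodes (merge_terminals F t)"
  shows "node_tensor (merge_terminals F t) p = (if p = t then (\<lambda>_. 1) else node_tensor F p)"
proof -
  let ?G = "merge_terminals F t"
  define T where "T = (\<lambda>p. if p = t then (\<lambda>_. 1) else node_tensor F p)"
  have t_term: "t \<in> t_terms F" using t by (simp add: terminals_valued_def)
  text \<open>After redirection and reweighting, an edge of weight w into q still contributes w
    times the tensor of q.\<close>
  have edge: "(if q \<in> terminals_valued F {0} then 0 else w)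
      * T (if q \<in> terminals_valued F {0, 1} then t else q) c = w * node_tensor F q c"
    if "q \<in> t_nodes F" for q w c
    using that t node_tensor_terminal[OF F, of q]
    by (auto simp: T_def terminals_valued_def)
  have "T p = node_expansion ?G T p" if "p \<in> t_nodes ?G" for p
  proof (cases "p \<in> t_terms F")
    case True
    with that have "p = t \<or> p \<notin> terminals_valued F {0, 1}" by auto
    then show ?thesis using True node_tensor_terminal[OF F True] by (auto simp: T_def node_expansion_def)
  next
    case False
    with that have p: "p \<in> nonterms F" "p \<notin> t_terms ?G" using t_term by (auto simp: nonterms_def)
    have "node_expansion ?G T p c = node_expansion F (node_tensor F) p c" for c
    proof -
      let ?x = "idx_tensor (t_idx F p) c"
      have "node_expansion ?G T p c
          = (1 - ?x) * (t_wlow ?G p * T (t_low ?G p) c) + ?x * (t_whigh ?G p * T (t_high ?G p) c)"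
        using p(2) by (simp only: node_expansion_def if_False merge_terminals_simps(3)) (simp add: algebra_simps)
      also have "\<dots> = (1 - ?x) * (t_wlow F p * node_tensor F (t_low F p) c)
          + ?x * (t_whigh F p * node_tensor F (t_high F p) c)"
        using edge[OF tdd_dag_nodes(4)[OF F p(1)]] edge[OF tdd_dag_nodes(5)[OF F p(1)]] by simp
      also have "\<dots> = node_expansion F (node_tensor F) p c"
        using nontermsD[OF p(1)] by (simp add: node_expansion_def algebra_simps)
      finally show ?thesis .
    qed
    moreover have "p \<noteq> t" using p(1) t_term by (auto simp: nonterms_def)
    ultimately show ?thesis
      using node_tensor_expansion[OF F nontermsD(1)[OF p(1)]] by (simp add: T_def fun_eq_iff)
  qed
  then have "T p = node_tensor ?G p" by (rule node_tensor_unique[OF merge_terminals_dag[OF F t] _ p])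
  then show ?thesis by (simp add: T_def)
qed

lemma rr1_sound:
  assumes inv: "normal_ordered_dag F" and "rr1 F G"
  shows "normal_ordered_dag G \<and> tdd_tensor G = tdd_tensor F"
proof -
  have F: "tdd_dag F" "ordered_tdd F" "normal_tdd F" using inv by (simp_all add: normal_ordered_dag_def)
  obtain t where t: "t \<in> terminals_valued F {0, 1}" and G: "G = merge_terminals F t"
    using assms(2) by (auto simp: rr1_iff)
  have t_term: "t \<in> t_terms F" using t by (simp add: terminals_valued_def)
  have tensors: "node_tensor G p = (if p = t then (\<lambda>_. 1) else node_tensor F p)" if "p \<in> t_nodes G" for p
    using node_tensor_merge_terminals[OF F(1) t] that G by simp
  have "normal_tdd G"
    using F(3) tensors normal_tensor_const[of 1] by (auto simp: normal_tdd_def G)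
  moreover have "ordered_tdd G"
    using F(2) by (auto simp: ordered_tdd_def nonterms_merge_terminals[OF t_term] G terminals_valued_def)
  moreover have "tdd_tensor G = tdd_tensor F"
  proof -
    have "t_root G \<in> t_nodes G" using tdd_dag_nodes(2)[OF merge_terminals_dag[OF F(1) t]] G by simp
    then show ?thesis
      using tensors t tdd_dag_nodes(2)[OF F(1)] node_tensor_terminal[OF F(1), of "t_root F"]
      by (auto simp: tdd_tensor_def G terminals_valued_def fun_eq_iff)
  qed
  ultimately show ?thesis using merge_terminals_dag[OF F(1) t] G by (simp add: normal_ordered_dag_def)
qed

definition redirect_zero_edges :: "('v,'i) tdd \<Rightarrow> 'v \<Rightarrow> ('v,'i) tdd" where
  "redirect_zero_edges F t = F\<lparr> t_root := (if t_wroot F = 0 then t else t_root F),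
      t_low := (\<lambda>v. if t_wlow F v = 0 then t else t_low F v),
      t_high := (\<lambda>v. if t_whigh F v = 0 then t else t_high F v) \<rparr>"

definition restrict_reachable :: "('v,'i) tdd \<Rightarrow> ('v,'i) tdd" where
  "restrict_reachable F =
     (let R = {v \<in> t_nodes F. (t_root F, v) \<in> (succ_rel F)\<^sup>*}
      in F\<lparr> t_nodes := R, t_terms := t_terms F \<inter> R \<rparr>)"

lemma rr2_iff:
  "rr2 F G \<longleftrightarrow> (\<exists>t. t_terms F = {t} \<and>
     ((t_wroot F = 0 \<and> t_root F \<noteq> t)
      \<or> (\<exists>v\<in>nonterms F. (t_wlow F v = 0 \<and> t_low F v \<noteq> t) \<or> (t_whigh F v = 0 \<and> t_high F v \<noteq> t))
      \<or> (\<exists>v\<in>t_nodes F. (t_root F, v) \<notin> (succ_rel F)\<^sup>*)) \<and>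
     G = restrict_reachable (redirect_zero_edges F t))"
  by (simp add: rr2_def restrict_reachable_def redirect_zero_edges_def Let_def)

lemma redirect_zero_edges_simps [simp]:
  "t_nodes (redirect_zero_edges F t) = t_nodes F"
  "t_terms (redirect_zero_edges F t) = t_terms F"
  "t_idx (redirect_zero_edges F t) = t_idx F"
  "t_val (redirect_zero_edges F t) = t_val F"
  "t_root (redirect_zero_edges F t) = (if t_wroot F = 0 then t else t_root F)"
  "t_low (redirect_zero_edges F t) = (\<lambda>v. if t_wlow F v = 0 then t else t_low F v)"
  "t_high (redirect_zero_edges F t) = (\<lambda>v. if t_whigh F v = 0 then t else t_high F v)"
  "t_wroot (redirect_zero_edges F t) = t_wroot F"
  "t_wlow (redirect_zero_edges F t) = t_wlow F"
  "t_whigh (redirect_zero_edges F t) = t_whigh F"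
  by (simp_all add: redirect_zero_edges_def)

lemma nonterms_redirect_zero_edges [simp]: "nonterms (redirect_zero_edges F t) = nonterms F"
  by (simp add: nonterms_def)

lemma redirect_zero_edges_sound:
  assumes inv: "normal_ordered_dag F" and t: "t \<in> t_terms F"
  defines "G \<equiv> redirect_zero_edges F t"
  shows "normal_ordered_dag G \<and> tdd_tensor G = tdd_tensor F"
proof -
  have F: "tdd_dag F" "ordered_tdd F" "normal_tdd F" using inv by (simp_all add: normal_ordered_dag_def)
  have "acyclic (succ_rel G)"
  proof (rule acyclic_redirect[where S = "succ_rel F" and s = t])
    show "acyclic (succ_rel F)" using F(1) by (simp add: tdd_dag_def)
    show "succ_rel G \<subseteq> succ_rel F \<union> UNIV \<times> {t}"
      by (auto simp: succ_rel_def G_def)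
    show "(a, b) \<in> succ_rel F" if "(t, a) \<in> (succ_rel F)\<^sup>*" "(a, b) \<in> succ_rel G" for a b
      using that succ_rel_rtrancl_terminal[of t a F] t by (auto simp: succ_rel_def G_def nonterms_def)
  qed
  then have dag: "tdd_dag G"
    using F(1) t by (auto simp: tdd_dag_def G_def)
  have "node_tensor F p = node_expansion G (node_tensor F) p" if "p \<in> t_nodes G" for p
    using that node_tensor_expansion[OF F(1), of p]
    by (auto simp: G_def node_expansion_def fun_eq_iff)
  then have same: "node_tensor G p = node_tensor F p" if "p \<in> t_nodes G" for p
    using node_tensor_unique[OF dag _ that] by metis
  have "ordered_tdd G"
    using F(2) t by (auto simp: ordered_tdd_def G_def)
  moreover have "normal_tdd G" using F(3) same by (simp add: normal_tdd_def G_def)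
  moreover have "tdd_tensor G = tdd_tensor F"
    using same[OF tdd_dag_nodes(2)[OF dag]] by (auto simp: tdd_tensor_def G_def)
  ultimately show ?thesis using dag by (simp add: normal_ordered_dag_def)
qed

lemma restrict_reachable_sound:
  assumes inv: "normal_ordered_dag F"
  defines "G \<equiv> restrict_reachable F"
  shows "normal_ordered_dag G \<and> tdd_tensor G = tdd_tensor F"
proof -
  have F: "tdd_dag F" "ordered_tdd F" "normal_tdd F" using inv by (simp_all add: normal_ordered_dag_def)
  define R where "R = {v \<in> t_nodes F. (t_root F, v) \<in> (succ_rel F)\<^sup>*}"
  have G: "G = F\<lparr> t_nodes := R, t_terms := t_terms F \<inter> R \<rparr>"
    by (simp add: G_def R_def restrict_reachable_def Let_def)
  have nonterms_G: "nonterms G = nonterms F \<inter> R" by (auto simp: G nonterms_def R_def)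
  have closed: "t_low F v \<in> R \<and> t_high F v \<in> R" if v: "v \<in> nonterms F" "v \<in> R" for v
  proof -
    have "(t_root F, v) \<in> (succ_rel F)\<^sup>*" using v(2) by (simp add: R_def)
    then have "(t_root F, t_low F v) \<in> (succ_rel F)\<^sup>*" "(t_root F, t_high F v) \<in> (succ_rel F)\<^sup>*"
      using succ_rel_low[OF v(1)] succ_rel_high[OF v(1)] by (simp_all add: rtrancl_into_rtrancl)
    then show ?thesis using tdd_dag_nodes(4,5)[OF F(1) v(1)] by (simp add: R_def)
  qed
  have "succ_rel G \<subseteq> succ_rel F" unfolding succ_rel_def nonterms_G by (auto simp: G)
  then have dag: "tdd_dag G"
    using F(1) closed tdd_dag_nodes(2)[OF F(1)] acyclic_subset unfolding tdd_dag_def nonterms_G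
    by (auto simp: G R_def intro: finite_subset)
  have "node_tensor F p = node_expansion G (node_tensor F) p" if "p \<in> t_nodes G" for p
    using that node_tensor_expansion[OF F(1), of p] by (simp add: G R_def node_expansion_def)
  then have same: "node_tensor G p = node_tensor F p" if "p \<in> t_nodes G" for p
    using node_tensor_unique[OF dag _ that] by metis
  have "ordered_tdd G"
    using F(2) closed unfolding ordered_tdd_def nonterms_G by (auto simp: G)
  moreover have "normal_tdd G" using F(3) same by (simp add: normal_tdd_def G R_def)
  moreover have "tdd_tensor G = tdd_tensor F"
    using same[OF tdd_dag_nodes(2)[OF dag]] by (simp add: tdd_tensor_def G)
  ultimately show ?thesis using dag by (simp add: normal_ordered_dag_def)
qed

lemma rr2_sound:
  assumes inv: "normal_ordered_dag F" and "rr2 F G"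
  shows "normal_ordered_dag G \<and> tdd_tensor G = tdd_tensor F"
proof -
  obtain t where "t_terms F = {t}" "G = restrict_reachable (redirect_zero_edges F t)"
    using assms(2) by (auto simp: rr2_iff)
  then show ?thesis
    using redirect_zero_edges_sound[OF inv] restrict_reachable_sound by fastforce
qed

lemma rr_step_sound:
  assumes "normal_ordered_dag F" "rr_step F G"
  shows "normal_ordered_dag G \<and> tdd_tensor G = tdd_tensor F"
  using assms(2) rr1_sound[OF assms(1)] rr2_sound[OF assms(1)] rr3_sound[OF assms(1)]
    rr4_sound[OF assms(1)]
  unfolding rr_step_def by blast

lemma rr_steps_sound:
  assumes "rr_step\<^sup>*\<^sup>* F G" "normal_ordered_dag F"
  shows "normal_ordered_dag G \<and> tdd_tensor G = tdd_tensor F"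
  using assms
proof (induction rule: rtranclp_induct)
  case (step G H)
  then show ?case using rr_step_sound[of G H] by simp
qed simp

section \<open>Irreducible TDDs are reduced\<close>

lemma rr1_applicable:
  assumes "2 \<le> card (terminals_valued F {1}) \<or> terminals_valued F {0} \<noteq> {}"
  shows "\<exists>G. rr1 F G"
proof -
  obtain t where "t \<in> terminals_valued F {1} \<or> terminals_valued F {1} = {} \<and> t \<in> terminals_valued F {0}"
    using assms by (cases "terminals_valued F {1} = {}") auto
  then have "t \<in> terminals_valued F {0, 1}" "t \<in> terminals_valued F {1} \<or> terminals_valued F {1} = {}"
    by (auto simp: terminals_valued_def)
  then show ?thesis unfolding rr1_iff using assms by blast
qed

lemma tdd_dag_terms_nonempty:
  assumes "tdd_dag F"
  shows "t_terms F \<noteq> {}"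
  using assms tdd_dag_nodes(2)[OF assms] by (induction rule: tdd_dag_induct) auto

locale irreducible_tdd =
  fixes G :: "('v, 'i::{finite,linorder}) tdd"
  assumes normal_ordered_dag: "normal_ordered_dag G"
    and irreducible: "\<not> (\<exists>H. rr_step G H)"
begin

lemma dag: "tdd_dag G" and ordered: "ordered_tdd G" and normal: "normal_tdd G"
  using normal_ordered_dag by (simp_all add: normal_ordered_dag_def)

definition the_terminal :: 'v where
  "the_terminal = the_elem (t_terms G)"

lemma rr1_not_applicable: "card (terminals_valued G {1}) < 2" "terminals_valued G {0} = {}"
proof -
  have "\<not> (\<exists>H. rr1 G H)" using irreducible by (simp add: rr_step_def)
  then show "card (terminals_valued G {1}) < 2" "terminals_valued G {0} = {}"
    using rr1_applicable[of G] by fastforce+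
qed

lemma terminal_values_one:
  assumes "u \<in> t_terms G"
  shows "t_val G u = 1"
proof -
  have "normal_tensor (\<lambda>_::'i assignment. t_val G u)"
    using normal node_tensor_terminal[OF dag assms] tdd_dag_nodes(3)[OF dag assms]
    by (metis normal_tdd_def)
  then show ?thesis
    using assms rr1_not_applicable(2) by (auto simp: normal_tensor_const terminals_valued_def)
qed

lemma terminals_eq: "t_terms G = {the_terminal}"
proof -
  have "terminals_valued G {1} = t_terms G"
    using terminal_values_one by (auto simp: terminals_valued_def)
  moreover have "finite (t_terms G)"
    using tdd_dag_nodes(1,3)[OF dag] by (meson finite_subset subsetI)
  ultimately have "card (t_terms G) = 1"
    using tdd_dag_terms_nonempty[OF dag] rr1_not_applicable(1) card_0_eq by fastforce
  then obtain t where "t_terms G = {t}" by (rule card_1_singletonE)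
  then show ?thesis by (simp add: the_terminal_def)
qed

lemma the_terminal_value: "t_val G the_terminal = 1"
  using terminal_values_one terminals_eq by simp

lemma zero_edges_to_terminal:
  "t_wroot G = 0 \<Longrightarrow> t_root G = the_terminal"
  "v \<in> nonterms G \<Longrightarrow> t_wlow G v = 0 \<Longrightarrow> t_low G v = the_terminal"
  "v \<in> nonterms G \<Longrightarrow> t_whigh G v = 0 \<Longrightarrow> t_high G v = the_terminal"
  using irreducible terminals_eq by (auto simp: rr_step_def rr2_iff)

lemma all_reachable: "v \<in> t_nodes G \<Longrightarrow> (t_root G, v) \<in> (succ_rel G)\<^sup>*"
  using irreducible terminals_eq by (auto simp: rr_step_def rr2_iff)

lemma no_redundant_unit_node:
  assumes "v \<in> nonterms G" "t_low G v = t_high G v" "t_wlow G v = 1"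
  shows "t_whigh G v \<noteq> 1"
proof
  assume "t_whigh G v = 1"
  then have "rr3 G (redirect_delete G v (t_low G v) False)"
    unfolding rr3_def using assms by (intro bexI[of _ v]) auto
  then show False using irreducible by (auto simp: rr_step_def)
qed

lemma weights_not_both_zero:
  assumes "v \<in> nonterms G"
  shows "t_wlow G v \<noteq> 0 \<or> t_whigh G v \<noteq> 0"
proof (rule ccontr)
  assume "\<not> ?thesis"
  then have "rr3 G (redirect_delete G v the_terminal True)"
    unfolding rr3_def using assms zero_edges_to_terminal(2,3)[OF assms] terminals_eq the_terminal_value
    by (intro bexI[of _ v]) auto
  then show False using irreducible by (auto simp: rr_step_def)
qed

lemma no_duplicate_nodes:
  assumes "u \<in> nonterms G" "v \<in> nonterms G" "t_idx G u = t_idx G v"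
    "t_low G u = t_low G v" "t_high G u = t_high G v"
    "t_wlow G u = t_wlow G v" "t_whigh G u = t_whigh G v"
  shows "u = v"
  using assms irreducible unfolding rr_step_def rr4_def by blast

lemma node_tensor_nonzero:
  assumes "v \<in> t_nodes G"
  shows "node_tensor G v \<noteq> (\<lambda>_. 0)"
  using dag assms
proof (induction rule: tdd_dag_induct)
  case (terminal v)
  then show ?case
    using node_tensor_terminal[OF dag] terminals_eq the_terminal_value by (auto simp: fun_eq_iff)
next
  case (nonterm v)
  show ?case
  proof (cases "t_wlow G v = 0")
    case False
    obtain c where "node_tensor G (t_low G v) c \<noteq> 0" using nonterm(2) by auto
    then have "node_tensor G v (c(t_idx G v := False)) \<noteq> 0"
      using node_tensor_cofactors(1)[OF dag ordered nonterm(1)] False by simp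
    then show ?thesis by auto
  next
    case True
    obtain c where "node_tensor G (t_high G v) c \<noteq> 0" using nonterm(3) by auto
    then have "node_tensor G v (c(t_idx G v := True)) \<noteq> 0"
      using node_tensor_cofactors(2)[OF dag ordered nonterm(1)] weights_not_both_zero[OF nonterm(1)] True by simp
    then show ?thesis by auto
  qed
qed

lemma normal_node_tensor: "v \<in> t_nodes G \<Longrightarrow> normal_tensor (node_tensor G v)"
  using normal by (simp add: normal_tdd_def)

lemma scaled_node_tensors_eq:
  assumes "a \<in> t_nodes G" "b \<in> t_nodes G" "\<And>c. wa * node_tensor G a c = wb * node_tensor G b c"
  shows "wa = wb \<and> (wa \<noteq> 0 \<longrightarrow> node_tensor G a = node_tensor G b)"
  using normal_tensor_scaled_eq[OF normal_node_tensor[OF assms(1)] normal_node_tensor[OF assms(2)]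
      node_tensor_nonzero[OF assms(1)] node_tensor_nonzero[OF assms(2)] assms(3)] .

lemma weighted_edge_eq:
  assumes "a \<in> t_nodes G" "b \<in> t_nodes G"
    and eq: "\<And>c. wa * node_tensor G a c = wb * node_tensor G b c"
    and "wa = 0 \<Longrightarrow> a = the_terminal" "wb = 0 \<Longrightarrow> b = the_terminal"
    and inj: "node_tensor G a = node_tensor G b \<Longrightarrow> a = b"
  shows "wa = wb \<and> a = b"
  using scaled_node_tensors_eq[OF assms(1,2) eq] assms(4-6) by auto

text \<open>If the tensor of v did not depend on its index, both cofactors would equal it, so by
  normality both weights are 1 and both children have the same tensor: RR3 would apply.\<close>
lemma node_tensor_depends_on_index:
  assumes v: "v \<in> nonterms G"
    and children_inj: "node_tensor G (t_low G v) = node_tensor G (t_high G v) \<Longrightarrow> t_low G v = t_high G v"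
  shows "\<not> indep_of (node_tensor G v) (t_idx G v)"
proof
  assume indep: "indep_of (node_tensor G v) (t_idx G v)"
  have v_node: "v \<in> t_nodes G" by (rule nontermsD(1)[OF v])
  have low: "1 * node_tensor G v c = t_wlow G v * node_tensor G (t_low G v) c"
    and high: "1 * node_tensor G v c = t_whigh G v * node_tensor G (t_high G v) c" for c
    using indep node_tensor_cofactors[OF dag ordered v, of c] by (simp_all add: indep_of_def)
  have "t_wlow G v = 1" "t_whigh G v = 1"
    using scaled_node_tensors_eq[OF v_node tdd_dag_nodes(4)[OF dag v] low]
      scaled_node_tensors_eq[OF v_node tdd_dag_nodes(5)[OF dag v] high] by simp_all
  moreover have "node_tensor G (t_low G v) = node_tensor G (t_high G v)"
    using low high calculation by (simp add: fun_eq_iff)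
  ultimately show False using no_redundant_unit_node[OF v] children_inj by blast
qed

lemma same_index_nodes_eq:
  assumes u: "u \<in> nonterms G" and v: "v \<in> nonterms G" and idx: "t_idx G u = t_idx G v"
    and eq: "node_tensor G u = node_tensor G v"
    and low_inj: "node_tensor G (t_low G u) = node_tensor G (t_low G v) \<Longrightarrow> t_low G u = t_low G v"
    and high_inj: "node_tensor G (t_high G u) = node_tensor G (t_high G v) \<Longrightarrow> t_high G u = t_high G v"
  shows "u = v"
proof -
  have "t_wlow G u = t_wlow G v \<and> t_low G u = t_low G v"
    using weighted_edge_eq[OF tdd_dag_nodes(4)[OF dag u] tdd_dag_nodes(4)[OF dag v] _
        zero_edges_to_terminal(2)[OF u] zero_edges_to_terminal(2)[OF v] low_inj]
      node_tensor_cofactors(1)[OF dag ordered u] node_tensor_cofactors(1)[OF dag ordered v] eq idx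
    by metis
  moreover have "t_whigh G u = t_whigh G v \<and> t_high G u = t_high G v"
    using weighted_edge_eq[OF tdd_dag_nodes(5)[OF dag u] tdd_dag_nodes(5)[OF dag v] _
        zero_edges_to_terminal(3)[OF u] zero_edges_to_terminal(3)[OF v] high_inj]
      node_tensor_cofactors(2)[OF dag ordered u] node_tensor_cofactors(2)[OF dag ordered v] eq idx
    by metis
  ultimately show ?thesis using no_duplicate_nodes[OF u v idx] by blast
qed

lemma node_tensor_inj:
  assumes "u \<in> t_nodes G" "v \<in> t_nodes G" "node_tensor G u = node_tensor G v"
  shows "u = v"
  using assms
proof (induction "max (card (descendants G u)) (card (descendants G v))" arbitrary: u v rule: less_induct)
  case less
  have child_inj: "a = b"
    if "a \<in> t_nodes G" "b \<in> t_nodes G" "node_tensor G a = node_tensor G b"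
      "(w, a) \<in> succ_rel G" "(w', b) \<in> succ_rel G" "w \<in> {u, v}" "w' \<in> {u, v}" for a b w w'
    using less.hyps[OF _ that(1-3)] card_descendants_less[OF dag that(4)]
      card_descendants_less[OF dag that(5)] that(6,7) by fastforce
  have not_indep: "\<not> indep_of (node_tensor G w) (t_idx G w)" if "w \<in> nonterms G" "w \<in> {u, v}" for w
    using node_tensor_depends_on_index[OF that(1)] child_inj tdd_dag_nodes(4,5)[OF dag that(1)]
      succ_rel_low[OF that(1)] succ_rel_high[OF that(1)] that(2) by blast
  have smaller_index: False
    if "w \<in> nonterms G" "w \<in> {u, v}" "w' \<in> t_nodes G" "w' \<in> nonterms G \<Longrightarrow> t_idx G w < t_idx G w'"
      "node_tensor G w = node_tensor G w'" for w w'
    using not_indep[OF that(1,2)] node_tensor_indep_of[OF dag ordered that(3,4)] that(5) by simp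
  consider "u \<in> t_terms G" "v \<in> t_terms G"
    | "u \<in> nonterms G" "v \<in> t_nodes G" "v \<in> nonterms G \<Longrightarrow> t_idx G u < t_idx G v"
    | "v \<in> nonterms G" "u \<in> t_nodes G" "u \<in> nonterms G \<Longrightarrow> t_idx G v < t_idx G u"
    | "u \<in> nonterms G" "v \<in> nonterms G" "t_idx G u = t_idx G v"
    using less.prems(1,2) nontermsI by (metis linorder_neqE)
  then show ?case
  proof cases
    case 1
    then show ?thesis using terminals_eq by simp
  next
    case 2
    then show ?thesis using smaller_index[of u v] less.prems(3) by simp
  next
    case 3
    then show ?thesis using smaller_index[of v u] less.prems(3) by simp
  next
    case 4
    then show ?thesis
      using same_index_nodes_eq[OF 4 less.prems(3)] child_inj tdd_dag_nodes(4,5)[OF dag]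
        succ_rel_low succ_rel_high
      by (meson insertI1 insertI2 singletonI)
  qed
qed

lemma reduced: "reduced_tdd G"
  unfolding reduced_tdd_def
  using normal node_tensor_nonzero terminals_eq the_terminal_value zero_edges_to_terminal
    node_tensor_inj
  by blast

lemma is_tdd: "is_tdd G"
  using dag all_reachable by (simp add: is_tdd_iff)

end

theorem theorem5:
  fixes F :: "('v, 'i::{finite,linorder}) tdd"
  assumes "is_tdd F" and "ordered_tdd F" and "normal_tdd F"
  shows "(\<forall>G. rr_step F G \<longrightarrow> tdd_tensor G = tdd_tensor F)
       \<and> (\<forall>G. rr_step\<^sup>*\<^sup>* F G \<and> \<not> (\<exists>H. rr_step G H) \<longrightarrow>
             is_tdd G \<and> ordered_tdd G \<and> reduced_tdd G \<and> tdd_tensor G = tdd_tensor F)"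
proof (rule conjI; intro allI impI)
  have inv: "normal_ordered_dag F"
    using assms by (simp add: normal_ordered_dag_def is_tdd_iff)
  show "tdd_tensor G = tdd_tensor F" if "rr_step F G" for G
    using rr_step_sound[OF inv that] by simp
  fix G assume steps: "rr_step\<^sup>*\<^sup>* F G \<and> \<not> (\<exists>H. rr_step G H)"
  have G: "normal_ordered_dag G \<and> tdd_tensor G = tdd_tensor F"
    using rr_steps_sound[OF conjunct1[OF steps] inv] .
  then have "irreducible_tdd G"
    unfolding irreducible_tdd_def using steps by blast
  with G show "is_tdd G \<and> ordered_tdd G \<and> reduced_tdd G \<and> tdd_tensor G = tdd_tensor F"
    using irreducible_tdd.reduced irreducible_tdd.is_tdd irreducible_tdd.ordered by blast
qed

end
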